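(* Let $G$ be a chordal graph, $p:\wp(V_G)\to\mathbb R$ a $G$-polymatroidal function, and $v_1,\dots,v_n$ an elimination ordering for $G$. For each $i$ let $N_i$ be the set of neighbors of $v_i$ among $v_1,\dots,v_{i-1}$. Then \[ p(V_G)=\sum_{S\subseteq \mathsf{MaxCliques}(G)} -(-1)^{|S|}\,p\big({\textstyle\bigcap}S\big) = \sum_{i=1}^n \Big(p(N_i\cup\{v_i\})-p(N_i)\Big). \]
   Context: Graphs are finite directed graphs; the underlying simple graph $\bar G$ has edges $\{v,w\}$, $v\neq w$, with $(v,w)$ or $(w,v)$ in $E_G$, and cliques, neighbors, chordality, separation refer to $\bar G$. $\mathsf{MaxCliques}(G)$ is the set of maximal cliques; $\bigcap S$ is the intersection of the family $S$, with $\bigcap\emptyset=\emptyset$. $G$ is chordal if $\bar G$ has no induced cycle of length $\ge4$. A vertex is eliminable in $G$ if its neighborhood is a clique; an enumeration $v_1,\dots,v_n$ of $V_G$ is an elimination ordering if $v_j$ is eliminable in the induced subgraph on $\{v_1,\dots,v_j\}$ for each $j$. A function $p:\wp(V_G)\to\mathbb R$ is $G$-polymatroidal if $p(\emptyset)=0$; $p(A)\le p(B)$ for $A\subseteq B$; $p(A\cap B)+p(A\cup B)\le p(A)+p(B)$ for all $A,B$; and $p(A\cap B)+p(A\cup B)=p(A)+p(B)$ whenever there is no edge of $\bar G$ between $A\setminus B$ and $B\setminus A$. *)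

theory Defs
  imports Complex_Main
begin

text \<open>A graph is a pair (V, E) with V finite and E a set of directed edges (pairs) on V.
  All graph notions refer to the underlying simple graph.\<close>

definition adj :: "('a \<times> 'a) set \<Rightarrow> 'a \<Rightarrow> 'a \<Rightarrow> bool" where
  "adj E v w \<longleftrightarrow> v \<noteq> w \<and> ((v, w) \<in> E \<or> (w, v) \<in> E)"

definition is_clique :: "'a set \<Rightarrow> ('a \<times> 'a) set \<Rightarrow> 'a set \<Rightarrow> bool" where
  "is_clique V E C \<longleftrightarrow> C \<subseteq> V \<and> (\<forall>v\<in>C. \<forall>w\<in>C. v \<noteq> w \<longrightarrow> adj E v w)"

definition MaxCliques :: "'a set \<Rightarrow> ('a \<times> 'a) set \<Rightarrow> 'a set set" where
  "MaxCliques V E = {C. is_clique V E C \<and> (\<forall>D. is_clique V E D \<and> C \<subseteq> D \<longrightarrow> D = C)}"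

text \<open>Intersection of a family, with the convention that the empty family has empty intersection.\<close>
definition Inter0 :: "'a set set \<Rightarrow> 'a set" where
  "Inter0 S = (if S = {} then {} else \<Inter>S)"

definition chordal :: "'a set \<Rightarrow> ('a \<times> 'a) set \<Rightarrow> bool" where
  "chordal V E \<longleftrightarrow> \<not> (\<exists>cs. distinct cs \<and> set cs \<subseteq> V \<and> length cs \<ge> 4 \<and>
      (\<forall>i < length cs. \<forall>j < length cs.
         adj E (cs ! i) (cs ! j) \<longleftrightarrow>
           (j = Suc i mod length cs \<or> i = Suc j mod length cs)))"

definition nbrs_in :: "('a \<times> 'a) set \<Rightarrow> 'a set \<Rightarrow> 'a \<Rightarrow> 'a set" where
  "nbrs_in E W v = {w \<in> W. adj E v w}"

definition eliminable_in :: "'a set \<Rightarrow> ('a \<times> 'a) set \<Rightarrow> 'a \<Rightarrow> bool" where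
  "eliminable_in W E v \<longleftrightarrow> is_clique W E (nbrs_in E W v)"

text \<open>An elimination ordering, given as a list enumerating V (v_1 = vs!0, ...).\<close>
definition elimination_ordering :: "'a set \<Rightarrow> ('a \<times> 'a) set \<Rightarrow> 'a list \<Rightarrow> bool" where
  "elimination_ordering V E vs \<longleftrightarrow> distinct vs \<and> set vs = V \<and>
     (\<forall>j < length vs. eliminable_in (set (take (Suc j) vs)) E (vs ! j))"

definition polymatroidal :: "'a set \<Rightarrow> ('a \<times> 'a) set \<Rightarrow> ('a set \<Rightarrow> real) \<Rightarrow> bool" where
  "polymatroidal V E p \<longleftrightarrow>
     p {} = 0 \<and>
     (\<forall>A B. A \<subseteq> B \<and> B \<subseteq> V \<longrightarrow> p A \<le> p B) \<and>
     (\<forall>A B. A \<subseteq> V \<and> B \<subseteq> V \<longrightarrow> p (A \<inter> B) + p (A \<union> B) \<le> p A + p B) \<and>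
     (\<forall>A B. A \<subseteq> V \<and> B \<subseteq> V \<and> (\<forall>a\<in>A - B. \<forall>b\<in>B - A. \<not> adj E a b) \<longrightarrow>
        p (A \<inter> B) + p (A \<union> B) = p A + p B)"

end

theory Submission
  imports Defs
begin

(*
  Let W_k be the first k vertices of the elimination ordering, v = v_(k+1),
  N its neighbours in W_k and K = N + {v}.  Since N is a clique, passing from W_k to W_(k+1)
  replaces the maximal clique N (if N was maximal) by the new maximal clique K and keeps all
  other maximal cliques.

  For a family M and a set T let  alt_sum p M T = sum over S <= M of (-1)^|S| p(T /\ Inter S).
  It satisfies the deletion recurrence  alt_sum (M + {K}) T = alt_sum M T - alt_sum M (T /\ K),
  vanishes when some member of M contains T, and apart from the term p T depends on T only
  inside the union of M.  By induction along the ordering this gives, for every p with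
  p {} = 0,  alt_sum p (MaxCliques W_k) W_k = p W_k - (sum of the gains p K_i - p N_i),
  i.e. inclusion-exclusion over the maximal cliques equals the total gain.  Independently,
  modularity of p on the separated pair (W_k, K) makes p W_k telescope into the same total
  gain.  The theorem combines the two identities.
*)

section \<open>The alternating sum over subfamilies\<close>

definition alt_sum :: "('a set \<Rightarrow> real) \<Rightarrow> 'a set set \<Rightarrow> 'a set \<Rightarrow> real" where
  "alt_sum p M T = (\<Sum>S\<in>Pow M. (-1) ^ card S * p (T \<inter> \<Inter>S))"

text \<open>Deletion recurrence: subfamilies containing K contribute the alternating sum for T \<inter> K.\<close>
lemma alt_sum_insert:
  assumes "finite M" "K \<notin> M"
  shows "alt_sum p (insert K M) T = alt_sum p M T - alt_sum p M (T \<inter> K)"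
proof -
  have disj: "Pow M \<inter> insert K ` Pow M = {}" using assms(2) by auto
  have inj: "inj_on (insert K) (Pow M)"
    using assms(2) by (intro inj_onI) (metis PowD insert_Diff_if insert_absorb insert_ident subsetD)
  have "alt_sum p (insert K M) T = alt_sum p M T
      + (\<Sum>S\<in>insert K ` Pow M. (-1) ^ card S * p (T \<inter> \<Inter>S))"
    unfolding alt_sum_def Pow_insert using assms(1) disj by (simp add: sum.union_disjoint)
  also have "(\<Sum>S\<in>insert K ` Pow M. (-1) ^ card S * p (T \<inter> \<Inter>S))
      = (\<Sum>S\<in>Pow M. (-1) ^ card (insert K S) * p (T \<inter> \<Inter>(insert K S)))"
    by (simp add: sum.reindex[OF inj])
  also have "\<dots> = (\<Sum>S\<in>Pow M. - ((-1) ^ card S * p ((T \<inter> K) \<inter> \<Inter>S)))"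
  proof (rule sum.cong)
    fix S assume "S \<in> Pow M"
    then have "finite S" "K \<notin> S" using assms finite_subset by auto
    then show "(-1) ^ card (insert K S) * p (T \<inter> \<Inter>(insert K S))
        = - ((-1) ^ card S * p ((T \<inter> K) \<inter> \<Inter>S))"
      by (simp add: Int_assoc)
  qed simp
  finally show ?thesis unfolding alt_sum_def by (simp add: sum_negf)
qed

lemma alt_sum_vanishes:
  assumes "finite M" "C \<in> M" "T \<subseteq> C"
  shows "alt_sum p M T = 0"
proof -
  have "M = insert C (M - {C})" using assms(2) by auto
  then have "alt_sum p M T = alt_sum p (M - {C}) T - alt_sum p (M - {C}) (T \<inter> C)"
    by (metis Diff_iff assms(1) finite_Diff alt_sum_insert singletonI)
  then show ?thesis using assms(3) by (simp add: Int_absorb2)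
qed

text \<open>Splitting off the empty subfamily: the remaining terms only see T through the members of M.\<close>
lemma alt_sum_split_empty:
  assumes "finite M"
  shows "alt_sum p M T = p T + (\<Sum>S\<in>Pow M - {{}}. (-1) ^ card S * p (T \<inter> \<Inter>S))"
  unfolding alt_sum_def using assms by (subst sum.remove[of _ "{}"]) auto

lemma alt_sum_diff_local:
  assumes "finite M" "\<forall>C\<in>M. C \<subseteq> A" "T \<inter> A = T' \<inter> A"
  shows "alt_sum p M T - alt_sum p M T' = p T - p T'"
proof -
  have "(\<Sum>S\<in>Pow M - {{}}. (-1) ^ card S * p (T \<inter> \<Inter>S))
      = (\<Sum>S\<in>Pow M - {{}}. (-1) ^ card S * p (T' \<inter> \<Inter>S))"
  proof (rule sum.cong)
    fix S assume "S \<in> Pow M - {{}}"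
    then have "\<Inter>S \<subseteq> A" using assms(2) by blast
    then have "T \<inter> \<Inter>S = T' \<inter> \<Inter>S" using assms(3) by blast
    then show "(-1) ^ card S * p (T \<inter> \<Inter>S) = (-1) ^ card S * p (T' \<inter> \<Inter>S)" by simp
  qed simp
  then show ?thesis using alt_sum_split_empty[OF assms(1)] by simp
qed

lemma incl_excl_eq_alt_sum:
  assumes "finite M" "\<forall>C\<in>M. C \<subseteq> T" "p {} = 0"
  shows "(\<Sum>S\<in>Pow M. - ((-1) ^ card S) * p (Inter0 S)) = p T - alt_sum p M T"
proof -
  have "(\<Sum>S\<in>Pow M. - ((-1) ^ card S) * p (Inter0 S))
      = (\<Sum>S\<in>Pow M - {{}}. - ((-1) ^ card S) * p (Inter0 S))"
    using assms(1,3) by (subst sum.remove[of _ "{}"]) (auto simp: Inter0_def)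
  also have "\<dots> = - (\<Sum>S\<in>Pow M - {{}}. (-1) ^ card S * p (T \<inter> \<Inter>S))"
    unfolding sum_negf[symmetric]
  proof (rule sum.cong)
    fix S assume S: "S \<in> Pow M - {{}}"
    then have "\<Inter>S \<subseteq> T" using assms(2) by blast
    then show "- ((-1) ^ card S) * p (Inter0 S) = - ((-1) ^ card S * p (T \<inter> \<Inter>S))"
      using S by (simp add: Inter0_def Int_absorb1)
  qed simp
  finally show ?thesis using alt_sum_split_empty[OF assms(1)] by simp
qed

section \<open>Maximal cliques\<close>

lemma adj_sym: "adj E a b = adj E b a"
  unfolding adj_def by auto

lemma MaxCliques_subset: "C \<in> MaxCliques W E \<Longrightarrow> C \<subseteq> W"
  by (simp add: MaxCliques_def is_clique_def)

lemma finite_MaxCliques: "finite W \<Longrightarrow> finite (MaxCliques W E)"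
  by (rule finite_subset[of _ "Pow W"]) (auto dest: MaxCliques_subset)

lemma clique_in_MaxClique:
  assumes "finite W" "is_clique W E Q"
  obtains C where "C \<in> MaxCliques W E" "Q \<subseteq> C"
proof -
  let ?A = "{D. is_clique W E D \<and> Q \<subseteq> D}"
  have "finite ?A" by (rule finite_subset[of _ "Pow W"]) (auto simp: is_clique_def assms(1))
  moreover have "?A \<noteq> {}" using assms(2) by auto
  ultimately obtain m where m: "m \<in> ?A" "\<forall>b\<in>?A. m \<subseteq> b \<longrightarrow> m = b"
    using finite_has_maximal by (metis (no_types, lifting))
  then have "m \<in> MaxCliques W E" unfolding MaxCliques_def by auto
  with m that show ?thesis by auto
qed

lemma MaxCliques_insert_simplicial:
  assumes "v \<notin> W" "is_clique (insert v W) E N" "N = nbrs_in E W v"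
  shows "MaxCliques (insert v W) E = insert (insert v N) (MaxCliques W E - {N})"
proof -
  have NW: "N \<subseteq> W" using assms(3) unfolding nbrs_in_def by auto
  have N_clique: "is_clique W E N" using assms(2) NW unfolding is_clique_def by auto
  have K_clique: "is_clique (insert v W) E (insert v N)"
    using assms(2,3) unfolding is_clique_def nbrs_in_def by (auto simp: adj_sym)
  have through_v: "D \<subseteq> insert v N" if "is_clique (insert v W) E D" "v \<in> D" for D
    using that assms(3) unfolding is_clique_def nbrs_in_def by auto
  have old_clique: "is_clique W E D \<longleftrightarrow> is_clique (insert v W) E D \<and> v \<notin> D" for D
    using assms(1) unfolding is_clique_def by auto
  show ?thesis
  proof (intro equalityI subsetI)
    fix C assume C: "C \<in> MaxCliques (insert v W) E"
    show "C \<in> insert (insert v N) (MaxCliques W E - {N})"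
    proof (cases "v \<in> C")
      case True
      then have "C \<subseteq> insert v N" using through_v C unfolding MaxCliques_def by auto
      then have "C = insert v N" using C K_clique unfolding MaxCliques_def by auto
      then show ?thesis by simp
    next
      case False
      then have "C \<in> MaxCliques W E" using C old_clique unfolding MaxCliques_def by auto
      moreover have "C \<noteq> insert v N" "insert v N \<noteq> N" using False NW assms(1) by auto
      then have "C \<noteq> N" using C K_clique unfolding MaxCliques_def by blast
      ultimately show ?thesis by simp
    qed
  next
    fix C assume C: "C \<in> insert (insert v N) (MaxCliques W E - {N})"
    show "C \<in> MaxCliques (insert v W) E"
    proof (cases "C = insert v N")
      case True
      then show ?thesis using K_clique through_v unfolding MaxCliques_def by auto
    next
      case False
      then have CM: "C \<in> MaxCliques W E" "C \<noteq> N" using C by auto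
      have vC: "v \<notin> C" using CM assms(1) by (auto dest: MaxCliques_subset)
      have "D = C" if D: "is_clique (insert v W) E D" "C \<subseteq> D" for D
      proof (cases "v \<in> D")
        case True
        then have "C \<subseteq> N" using through_v D vC by auto
        then show ?thesis using CM N_clique unfolding MaxCliques_def by auto
      next
        case False
        then show ?thesis using CM D old_clique unfolding MaxCliques_def by auto
      qed
      then show ?thesis using CM old_clique unfolding MaxCliques_def by auto
    qed
  qed
qed

lemma alt_sum_MaxCliques_insert_simplicial:
  assumes "finite W" "v \<notin> W" "is_clique (insert v W) E (nbrs_in E W v)"
  shows "alt_sum p (MaxCliques (insert v W) E) (insert v W)
       = alt_sum p (MaxCliques W E) W + (p (insert v W) - p W)
         - (p (insert v (nbrs_in E W v)) - p (nbrs_in E W v))"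
proof -
  define N where "N = nbrs_in E W v"
  define M where "M = MaxCliques W E - {N}"
  have NW: "N \<subseteq> W" unfolding N_def nbrs_in_def by auto
  have fM: "finite M" unfolding M_def using finite_MaxCliques[OF assms(1)] by simp
  have M_sub: "\<forall>C\<in>M. C \<subseteq> W" unfolding M_def using MaxCliques_subset by blast
  have KM: "insert v N \<notin> M" using M_sub assms(2) by auto
  have new: "alt_sum p (MaxCliques (insert v W) E) (insert v W)
      = alt_sum p M (insert v W) - alt_sum p M (insert v N)"
    using alt_sum_insert[OF fM KM, of p "insert v W"] NW
    unfolding MaxCliques_insert_simplicial[OF assms(2,3) refl] N_def[symmetric] M_def
    by (simp add: Int_absorb1 insert_mono)
  have shift_W: "alt_sum p M (insert v W) - alt_sum p M W = p (insert v W) - p W"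
    by (rule alt_sum_diff_local[where A=W]) (use fM M_sub in auto)
  have shift_N: "alt_sum p M (insert v N) - alt_sum p M N = p (insert v N) - p N"
    by (rule alt_sum_diff_local[where A=W]) (use fM M_sub assms(2) NW in auto)
  have old: "alt_sum p (MaxCliques W E) W = alt_sum p M W - alt_sum p M N"
  proof (cases "N \<in> MaxCliques W E")
    case True
    then have "MaxCliques W E = insert N M" unfolding M_def by auto
    then show ?thesis using alt_sum_insert[OF fM, of N p W] NW by (simp add: M_def Int_absorb1)
  next
    case False
    have "is_clique W E N" using assms(3) NW unfolding N_def is_clique_def by auto
    then obtain C where "C \<in> MaxCliques W E" "N \<subseteq> C" using clique_in_MaxClique assms(1) by metis
    then have "alt_sum p (MaxCliques W E) N = 0"
      using alt_sum_vanishes finite_MaxCliques[OF assms(1)] by blast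
    moreover have "M = MaxCliques W E" using False unfolding M_def by auto
    ultimately show ?thesis by simp
  qed
  show ?thesis using new shift_W shift_N old unfolding N_def by simp
qed

text \<open>Adding v with neighbourhood N in W is modular: (W, N + {v}) is a separated pair,
  so p gains the same amount on W as on N.\<close>
lemma polymatroidal_gain_insert:
  assumes pm: "polymatroidal V E p" and "W \<subseteq> V" "v \<in> V" "v \<notin> W"
  shows "p (insert v W) - p W = p (insert v (nbrs_in E W v)) - p (nbrs_in E W v)"
proof -
  define N where "N = nbrs_in E W v"
  have NW: "N \<subseteq> W" unfolding N_def nbrs_in_def by auto
  have separated: "\<forall>a\<in>W - insert v N. \<forall>b\<in>insert v N - W. \<not> adj E a b"
    unfolding N_def nbrs_in_def by (auto simp: adj_sym)
  have "p (W \<inter> insert v N) + p (W \<union> insert v N) = p W + p (insert v N)"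
    using pm separated assms(2,3) NW unfolding polymatroidal_def by (metis insert_subset order_trans)
  moreover have "W \<inter> insert v N = N" "W \<union> insert v N = insert v W" using NW assms(4) by auto
  ultimately show ?thesis unfolding N_def by simp
qed

section \<open>Elimination orderings\<close>

definition earlier_nbrs :: "('a \<times> 'a) set \<Rightarrow> 'a list \<Rightarrow> nat \<Rightarrow> 'a set" where
  "earlier_nbrs E vs i = nbrs_in E (set (take i vs)) (vs ! i)"

definition gain_sum :: "('a set \<Rightarrow> real) \<Rightarrow> ('a \<times> 'a) set \<Rightarrow> 'a list \<Rightarrow> nat \<Rightarrow> real" where
  "gain_sum p E vs k = (\<Sum>i<k. p (earlier_nbrs E vs i \<union> {vs ! i}) - p (earlier_nbrs E vs i))"

lemma gain_sum_Suc:
  "gain_sum p E vs (Suc k) = gain_sum p E vs k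
     + (p (insert (vs ! k) (earlier_nbrs E vs k)) - p (earlier_nbrs E vs k))"
  unfolding gain_sum_def by simp

lemma elimination_ordering_step:
  assumes eo: "elimination_ordering V E vs" and k: "k < length vs"
  shows "set (take (Suc k) vs) = insert (vs ! k) (set (take k vs))"
    and "vs ! k \<notin> set (take k vs)"
    and "is_clique (insert (vs ! k) (set (take k vs))) E (nbrs_in E (set (take k vs)) (vs ! k))"
proof -
  show prefix: "set (take (Suc k) vs) = insert (vs ! k) (set (take k vs))"
    using k by (simp add: take_Suc_conv_app_nth)
  have "distinct (take (Suc k) vs)" using eo unfolding elimination_ordering_def by simp
  then show "vs ! k \<notin> set (take k vs)" using k by (simp add: take_Suc_conv_app_nth)
  have "eliminable_in (set (take (Suc k) vs)) E (vs ! k)"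
    using eo k unfolding elimination_ordering_def by blast
  moreover have "nbrs_in E (insert (vs ! k) (set (take k vs))) (vs ! k)
      = nbrs_in E (set (take k vs)) (vs ! k)"
    unfolding nbrs_in_def adj_def by auto
  ultimately show "is_clique (insert (vs ! k) (set (take k vs))) E (nbrs_in E (set (take k vs)) (vs ! k))"
    unfolding prefix eliminable_in_def by simp
qed

lemma alt_sum_MaxCliques_prefix:
  assumes eo: "elimination_ordering V E vs" and p0: "p {} = 0"
  shows "k \<le> length vs \<Longrightarrow> alt_sum p (MaxCliques (set (take k vs)) E) (set (take k vs))
      = p (set (take k vs)) - gain_sum p E vs k"
proof (induction k)
  case 0
  have "MaxCliques {} E = {{}}" unfolding MaxCliques_def is_clique_def by auto
  then show ?case using p0 by (simp add: alt_sum_def gain_sum_def)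
next
  case (Suc k)
  then have k: "k < length vs" by simp
  show ?case
    using Suc alt_sum_MaxCliques_insert_simplicial[OF _ elimination_ordering_step(2,3)[OF eo k]]
    unfolding elimination_ordering_step(1)[OF eo k] gain_sum_Suc earlier_nbrs_def by simp
qed

lemma incl_excl_MaxCliques:
  assumes "elimination_ordering V E vs" "p {} = 0"
  shows "(\<Sum>S\<in>Pow (MaxCliques V E). - ((-1) ^ card S) * p (Inter0 S)) = gain_sum p E vs (length vs)"
proof -
  have V: "set vs = V" using assms(1) unfolding elimination_ordering_def by simp
  show ?thesis
    using incl_excl_eq_alt_sum[of "MaxCliques V E" V p] finite_MaxCliques[of V E] assms(2)
      alt_sum_MaxCliques_prefix[of V E vs p "length vs"] assms V
    by (auto dest: MaxCliques_subset)
qed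

lemma polymatroidal_prefix_telescope:
  assumes eo: "elimination_ordering V E vs" and pm: "polymatroidal V E p"
  shows "k \<le> length vs \<Longrightarrow> p (set (take k vs)) = gain_sum p E vs k"
proof (induction k)
  case 0
  then show ?case using pm unfolding polymatroidal_def gain_sum_def by simp
next
  case (Suc k)
  then have k: "k < length vs" by simp
  have V: "set vs = V" using eo unfolding elimination_ordering_def by simp
  have "set (take k vs) \<subseteq> V" "vs ! k \<in> V" using V k by (auto dest: in_set_takeD)
  then show ?case
    using Suc polymatroidal_gain_insert[OF pm _ _ elimination_ordering_step(2)[OF eo k]]
    unfolding elimination_ordering_step(1)[OF eo k] gain_sum_Suc earlier_nbrs_def by simp
qed

theorem lemma2p4:
  fixes V :: "'a set" and E :: "('a \<times> 'a) set" and p :: "'a set \<Rightarrow> real" and vs :: "'a list"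
  assumes "finite V" and "E \<subseteq> V \<times> V"
    and "chordal V E"
    and "polymatroidal V E p"
    and "elimination_ordering V E vs"
  shows "p V = (\<Sum>S\<in>Pow (MaxCliques V E). - ((-1) ^ card S) * p (Inter0 S))
       \<and> (\<Sum>S\<in>Pow (MaxCliques V E). - ((-1) ^ card S) * p (Inter0 S))
           = (\<Sum>i<length vs. p (nbrs_in E (set (take i vs)) (vs ! i) \<union> {vs ! i})
                               - p (nbrs_in E (set (take i vs)) (vs ! i)))"
proof -
  have "p {} = 0" using assms(4) unfolding polymatroidal_def by simp
  then have sieve: "(\<Sum>S\<in>Pow (MaxCliques V E). - ((-1) ^ card S) * p (Inter0 S))
      = gain_sum p E vs (length vs)"
    using incl_excl_MaxCliques[OF assms(5)] by simp
  have "set vs = V" using assms(5) unfolding elimination_ordering_def by simp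
  then have "p V = gain_sum p E vs (length vs)"
    using polymatroidal_prefix_telescope[OF assms(5,4), of "length vs"] by simp
  with sieve show ?thesis unfolding gain_sum_def earlier_nbrs_def by simp
qed

end
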